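(* Fix $\tau\in(0,1)$ and consider the moment function ($m=1$) $\rho(y,\mu,q)=\big((1-\tau)^{-1}y\,\mathbb I[y\ge q]-\mu,\ \tau-\mathbb I[y\le q]\big)$, so that $\nu_a^*(x)=(\mu_a^*(x;\tau),q_a^*(x;\tau))$ consists of the conditional super-quantile and the conditional $\tau$-quantile of $Y\mid X=x,A=a$, and the CDTE is $\mathrm{CSQTE}(x;\tau)=\mu_1^*(x;\tau)-\mu_0^*(x;\tau)$. Assume the conditional distributions of $Y$ given $X=x,A=a$ are continuous. Then the general pseudo-outcome (defined in the context) specializes to $$\psi^{\mathrm{CSQTE}}(Z,e,\mu,q)=\mu_1(X;\tau)-\mu_0(X;\tau)+\frac{A-e(X)}{e(X)(1-e(X))}\Big(q_A(X;\tau)+\frac{1}{1-\tau}(Y-q_A(X;\tau))\mathbb I[Y\ge q_A(X;\tau)]-\mu_A(X;\tau)\Big).$$ Furthermore, if the Boundedness Assumption (in the context) holds and the cross-fitted nuisance estimates $(\hat e^{(k)},\hat\mu^{(k)},\hat q^{(k)})$ lie in $\Xi$, then $$\mathcal E\lesssim\sum_{k=1}^K\sum_{a=0}^1\Big(\|\hat\mu_a^{(k)}-\mu_a^*\|\,\|\hat e^{(k)}-e^*\|+\|\hat q_a^{(k)}-q_a^*\|^2\Big).$$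
   Context: $Z=(X,A,Y)$ with $X\in\mathcal X$, $A\in\{0,1\}$, $Y\in\mathbb R$, $e^*(x)=P(A=1\mid X=x)$; $\|g\|=\mathbb E[g^2]^{1/2}$. $D$ denotes directional derivatives. The super-quantile at level $\tau$ of a distribution $F$ is $\inf_\beta \mathbb E_F[\beta+(1-\tau)^{-1}\max\{Y-\beta,0\}]$. General setting: for a moment function $\rho:\mathbb R\times\mathbb R^{m+1}\to\mathbb R^{m+1}$, $\rho(y,\nu)$ with $\nu=(\kappa,h)$, $\nu_a^*(x)=(\kappa_a^*(x),h_a^*(x))$ solves $\mathbb E[\rho(Y,\nu)\mid X=x,A=a]=0$; $J_a^*(x)=D_\nu\{\mathbb E[\rho(Y,\nu)\mid X=x,A=a]\}|_{\nu=\nu_a^*(x)}$ (assumed invertible) and $\alpha_a^*(x)$ is the first row of $J_a^*(x)^{-1}$. The pseudo-outcome for stand-ins $(e,\alpha,\nu)$ is $\psi(Z,e,\alpha,\nu)=\kappa_1(X)-\kappa_0(X)-\frac{A-e(X)}{e(X)(1-e(X))}\alpha_A(X)^T\rho(Y,\nu_A(X))$. Cross-fitting: given $n$ i.i.d. copies of $Z$, $K\ge2$ folds $I_k=\{i:i\equiv k-1\pmod K\}$, nuisance estimates $(\hat e^{(k)},\hat\alpha^{(k)},\hat\nu^{(k)})$ built from data outside $I_k$. $\mathcal E=\sum_{k=1}^K\mathcal E(\hat e^{(k)},\hat\alpha^{(k)},\hat\nu^{(k)})$, where $\mathcal E(e,\alpha,\nu)=\sum_{a=0}^1\big(\|\kappa_a-\kappa_a^*\|\|e-e^*\|+\sum_{i,j}G_{ij}\|\alpha_{a,i}-\alpha^*_{a,i}\|\|\nu_{a,j}-\nu^*_{a,j}\|+\sum_{i,j}H_{ij}\|\nu_{a,i}-\nu^*_{a,i}\|\|\nu_{a,j}-\nu^*_{a,j}\|\big)$.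 Boundedness Assumption: for a set $\Xi$ of nuisance realizations, there exist $c_1>0,c_2\ge0,c_3\ge0,c_4>0,c_5\ge0$ and $G,H\in\{0,1\}^{(m+1)\times(m+1)}$ such that for all $(e,\alpha,\nu)\in\Xi$, $a$, $i,j,l$, and $\bar\nu_a$ in the convex hull of $\{\nu_a^*,\nu_a\}$: $e^*(X),e(X)\in[c_1,1-c_1]$; $|D_{\nu_{a,j}}\mathbb E[\rho_i(Y,\nu_a)\mid X,A=a]|_{\nu_a=\bar\nu_a}|\le c_2G_{ij}$; $|D_{\nu_{a,l}}D_{\nu_{a,j}}\mathbb E[\rho_i(Y,\nu_a)\mid X=x,A=a]|_{\nu_a=\bar\nu_a}|\le c_3H_{jl}$; $\det(D_{\nu_a}\{\mathbb E[\rho(Y,\nu_a)\mid X=x,A=a]\}|_{\nu_a=\bar\nu_a})>c_4$; $|\rho_i(Y,\bar\nu_a)|\le c_5$. *)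

theory Defs
  imports "HOL-Probability.Probability"
begin

section \<open>Vectors in R^2 (m = 1): component 1 = kappa (= mu), component 2 = h (= q)\<close>

definition mk2 :: "real \<Rightarrow> real \<Rightarrow> real^2" where
  "mk2 u v = (\<chi> i. if i = 1 then u else v)"

definition rho_sq :: "real \<Rightarrow> real \<Rightarrow> real^2 \<Rightarrow> real^2" where
  "rho_sq tau y nu =
     mk2 (y * (if y \<ge> nu$2 then 1 else 0) / (1 - tau) - nu$1)
         (tau - (if y \<le> nu$2 then 1 else 0))"

text \<open>Conditional moment  E[rho(Y,nu) | X = x, A = a], where Kc a x is the conditional
  law of Y given X = x, A = a.\<close>
definition cmom :: "real \<Rightarrow> (nat \<Rightarrow> 'x \<Rightarrow> real measure) \<Rightarrow> nat \<Rightarrow> 'x \<Rightarrow> real^2 \<Rightarrow> real^2" where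
  "cmom tau Kc a x nu = (\<chi> i. \<integral>y. rho_sq tau y nu $ i \<partial>(Kc a x))"

definition pdir :: "(real^2 \<Rightarrow> real^2) \<Rightarrow> 2 \<Rightarrow> 2 \<Rightarrow> real^2 \<Rightarrow> real" where
  "pdir f i j nu = deriv (\<lambda>t. f (nu + t *\<^sub>R axis j 1) $ i) 0"

definition jac :: "real \<Rightarrow> (nat \<Rightarrow> 'x \<Rightarrow> real measure) \<Rightarrow> nat \<Rightarrow> 'x \<Rightarrow> real^2 \<Rightarrow> real^2^2" where
  "jac tau Kc a x nu = (\<chi> i j. pdir (cmom tau Kc a x) i j nu)"

definition alpha_star :: "real \<Rightarrow> (nat \<Rightarrow> 'x \<Rightarrow> real measure) \<Rightarrow> (nat \<Rightarrow> 'x \<Rightarrow> real^2) \<Rightarrow> nat \<Rightarrow> 'x \<Rightarrow> real^2" where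
  "alpha_star tau Kc nus a x = matrix_inv (jac tau Kc a x (nus a x)) $ 1"

definition psi_gen :: "real \<Rightarrow> 'x \<times> nat \<times> real \<Rightarrow> ('x \<Rightarrow> real) \<Rightarrow> (nat \<Rightarrow> 'x \<Rightarrow> real^2)
                       \<Rightarrow> (nat \<Rightarrow> 'x \<Rightarrow> real^2) \<Rightarrow> real" where
  "psi_gen tau z e al nu = (case z of (x, a, y) \<Rightarrow>
      nu 1 x $ 1 - nu 0 x $ 1
      - (real a - e x) / (e x * (1 - e x)) * (al a x \<bullet> rho_sq tau y (nu a x)))"

definition psi_csqte :: "real \<Rightarrow> 'x \<times> nat \<times> real \<Rightarrow> ('x \<Rightarrow> real) \<Rightarrow> (nat \<Rightarrow> 'x \<Rightarrow> real)
                       \<Rightarrow> (nat \<Rightarrow> 'x \<Rightarrow> real) \<Rightarrow> real" where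
  "psi_csqte tau z e mu q = (case z of (x, a, y) \<Rightarrow>
      mu 1 x - mu 0 x
      + (real a - e x) / (e x * (1 - e x)) *
        (q a x + (y - q a x) * (if y \<ge> q a x then 1 else 0) / (1 - tau) - mu a x))"

text \<open>Nuisances (mu,q) as nu = (kappa,h), and the alpha implied by q (the form of alpha*).\<close>
definition nu_of :: "(nat \<Rightarrow> 'x \<Rightarrow> real) \<Rightarrow> (nat \<Rightarrow> 'x \<Rightarrow> real) \<Rightarrow> nat \<Rightarrow> 'x \<Rightarrow> real^2" where
  "nu_of mu q a x = mk2 (mu a x) (q a x)"

definition alpha_of :: "real \<Rightarrow> (nat \<Rightarrow> 'x \<Rightarrow> real) \<Rightarrow> nat \<Rightarrow> 'x \<Rightarrow> real^2" where
  "alpha_of tau q a x = mk2 (-1) (q a x / (1 - tau))"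

definition L2n :: "'x measure \<Rightarrow> ('x \<Rightarrow> real) \<Rightarrow> real" where
  "L2n PX g = sqrt (\<integral>x. (g x)^2 \<partial>PX)"

definition err_fun :: "'x measure \<Rightarrow> ('x \<Rightarrow> real) \<Rightarrow> (nat \<Rightarrow> 'x \<Rightarrow> real^2) \<Rightarrow> (nat \<Rightarrow> 'x \<Rightarrow> real^2)
    \<Rightarrow> real^2^2 \<Rightarrow> real^2^2
    \<Rightarrow> ('x \<Rightarrow> real) \<Rightarrow> (nat \<Rightarrow> 'x \<Rightarrow> real^2) \<Rightarrow> (nat \<Rightarrow> 'x \<Rightarrow> real^2) \<Rightarrow> real" where
  "err_fun PX es als nus G H e al nu =
     (\<Sum>a\<in>{0,1::nat}.
        L2n PX (\<lambda>x. nu a x $ 1 - nus a x $ 1) * L2n PX (\<lambda>x. e x - es x)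
      + (\<Sum>i\<in>UNIV. \<Sum>j\<in>UNIV. G $ i $ j * L2n PX (\<lambda>x. al a x $ i - als a x $ i)
                                        * L2n PX (\<lambda>x. nu a x $ j - nus a x $ j))
      + (\<Sum>i\<in>UNIV. \<Sum>j\<in>UNIV. H $ i $ j * L2n PX (\<lambda>x. nu a x $ i - nus a x $ i)
                                        * L2n PX (\<lambda>x. nu a x $ j - nus a x $ j)))"

definition boundedness ::
  "real \<Rightarrow> 'x measure \<Rightarrow> (nat \<Rightarrow> 'x \<Rightarrow> real measure) \<Rightarrow> ('x \<Rightarrow> real) \<Rightarrow> (nat \<Rightarrow> 'x \<Rightarrow> real^2)
   \<Rightarrow> (('x \<Rightarrow> real) \<times> (nat \<Rightarrow> 'x \<Rightarrow> real^2) \<times> (nat \<Rightarrow> 'x \<Rightarrow> real^2)) set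
   \<Rightarrow> real \<Rightarrow> real \<Rightarrow> real \<Rightarrow> real \<Rightarrow> real \<Rightarrow> real^2^2 \<Rightarrow> real^2^2 \<Rightarrow> bool" where
  "boundedness tau PX Kc es nus Xi c1 c2 c3 c4 c5 G H \<longleftrightarrow>
     c1 > 0 \<and> c2 \<ge> 0 \<and> c3 \<ge> 0 \<and> c4 > 0 \<and> c5 \<ge> 0 \<and>
     (\<forall>i j. G $ i $ j \<in> {0, 1}) \<and> (\<forall>i j. H $ i $ j \<in> {0, 1}) \<and>
     (\<forall>(e, al, nu) \<in> Xi. \<forall>a \<in> {0, 1}. AE x in PX.
        es x \<in> {c1 .. 1 - c1} \<and> e x \<in> {c1 .. 1 - c1} \<and>
        (\<forall>nub \<in> convex hull {nus a x, nu a x}.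
           (\<forall>i j. \<exists>d. ((\<lambda>t. cmom tau Kc a x (nub + t *\<^sub>R axis j 1) $ i) has_real_derivative d) (at 0)
                       \<and> \<bar>d\<bar> \<le> c2 * G $ i $ j) \<and>
           (\<forall>i j l. \<exists>d. ((\<lambda>t. pdir (cmom tau Kc a x) i j (nub + t *\<^sub>R axis l 1)) has_real_derivative d) (at 0)
                       \<and> \<bar>d\<bar> \<le> c3 * H $ j $ l) \<and>
           det (jac tau Kc a x nub) > c4 \<and>
           (\<forall>i. AE y in Kc a x. \<bar>rho_sq tau y nub $ i\<bar> \<le> c5)))"

text \<open>Sparsity patterns of the first and second derivatives of E[rho(Y,nu)|X,A] for the CSQTE
  moment function: rho_2 does not depend on mu, and rho is affine in mu.\<close>
definition G_sq :: "real^2^2" where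
  "G_sq = (\<chi> i j. if i = 2 \<and> j = 1 then 0 else 1)"

definition H_sq :: "real^2^2" where
  "H_sq = (\<chi> j l. if j = 2 \<and> l = 2 then 1 else 0)"

end

theory Submission
  imports Defs
begin

(* For the super-quantile moment function the Jacobian J of nu |-> E[rho(Y, nu) | X, A] is
   upper triangular with J11 = -1: rho_1 is affine in mu and rho_2 does not involve mu. Moving
   q to q + t changes (1 - tau) E[rho_1] by -E[Y 1{q <= Y < q + t}] and E[rho_2] by
   -P(q < Y <= q + t); without atoms the first differs from -q P(q < Y <= q + t) by at most
   t P(q < Y <= q + t). Dividing by t and letting t -> 0 gives (1 - tau) J12 = q J22 with no
   density assumption, so the first row of J^-1 is (-1, q / (1 - tau)). Substituting this alpha
   into the general pseudo-outcome gives psi^CSQTE off the null event Y = q. For the rate,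
   alpha_1 - alpha^*_1 vanishes and alpha_2 - alpha^*_2 is q - q^* divided by 1 - tau, so with
   the sparsity patterns G and H every term of the error functional is bounded by
   ||mu - mu^*|| ||e - e^*|| or a multiple of ||q - q^*||^2. *)

lemma matrix_inv_eqI:
  fixes A :: "'a::semiring_1^'n^'m" and B :: "'a^'m^'n"
  assumes "A ** B = mat 1" and "B ** A = mat 1"
  shows "matrix_inv A = B"
proof -
  define B' where "B' = matrix_inv A"
  have "A ** B' = mat 1 \<and> B' ** A = mat 1"
    unfolding B'_def matrix_inv_def by (rule someI[of _ B]) (use assms in blast)
  then have "B' = B' ** (A ** B)" and "B' ** A = mat 1" using assms by simp_all
  then show ?thesis by (simp add: matrix_mul_assoc B'_def)
qed

lemma mk2_nth [simp]: "mk2 u v $ 1 = u" "mk2 u v $ 2 = v"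
  by (simp_all add: mk2_def)

lemma matrix_inv_upper_triangular_row1:
  fixes A :: "real^2^2"
  assumes "A $ 2 $ 1 = 0" and "A $ 1 $ 1 \<noteq> 0" and "A $ 2 $ 2 \<noteq> 0"
  shows "matrix_inv A $ 1 = mk2 (1 / A$1$1) (- A$1$2 / (A$1$1 * A$2$2))"
proof -
  define B :: "real^2^2" where
    "B = (\<chi> i j. if i = 1 then (if j = 1 then 1 / A$1$1 else - A$1$2 / (A$1$1 * A$2$2))
                 else (if j = 1 then 0 else 1 / A$2$2))"
  have "A ** B = mat 1" "B ** A = mat 1"
    using assms unfolding B_def
    by (auto simp: matrix_matrix_mult_def vec_eq_iff forall_2 sum_2 mat_def field_simps)
  then show ?thesis
    by (simp add: matrix_inv_eqI B_def vec_eq_iff forall_2)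
qed

lemma DERIV_eq_0_if_right_increments_vanish:
  fixes h r :: "real \<Rightarrow> real"
  assumes deriv: "(h has_real_derivative D) (at x)"
    and incr: "\<And>t. 0 < t \<Longrightarrow> \<bar>h (x + t) - h x\<bar> \<le> t * r t"
    and r: "(r \<longlongrightarrow> 0) (at_right 0)"
  shows "D = 0"
proof -
  have "((\<lambda>t. \<bar>(h (x + t) - h x) / t\<bar>) \<longlongrightarrow> \<bar>D\<bar>) (at_right 0)"
    using deriv unfolding DERIV_def by (intro tendsto_rabs) (rule tendsto_mono[OF at_le[OF subset_UNIV]])
  moreover have "\<forall>\<^sub>F t in at_right 0. \<bar>(h (x + t) - h x) / t\<bar> \<le> r t"
  proof (rule eventually_at_rightI[where b = 1])
    fix t :: real assume "t \<in> {0<..<1}"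
    then show "\<bar>(h (x + t) - h x) / t\<bar> \<le> r t"
      using incr[of t] by (simp add: abs_divide pos_divide_le_eq mult.commute)
  qed simp
  ultimately have "\<bar>D\<bar> \<le> 0"
    by (rule tendsto_le[OF trivial_limit_at_right_real r])
  then show ?thesis by simp
qed

lemma AE_neq_if_no_atom:
  assumes "finite_measure M" and "{c} \<in> sets M" and "measure M {c} = 0"
  shows "AE y in M. y \<noteq> c"
proof -
  have "{c} \<in> null_sets M"
    using assms by (simp add: finite_measure.emeasure_eq_measure null_sets_def)
  then show ?thesis using AE_not_in by fastforce
qed

lemma indicator_increment_bound:
  fixes q t y :: real
  assumes "y \<noteq> q" and "y \<noteq> q + t" and "0 < t"
  shows "\<bar>y * ((if y \<ge> q + t then 1 else 0) - (if y \<ge> q then 1 else 0))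
           + q * ((if y \<le> q + t then 1 else 0) - (if y \<le> q then 1 else 0))\<bar>
         \<le> t * ((if y \<le> q + t then 1 else 0) - (if y \<le> q then 1 else 0))"
  using assms by auto

lemma nu_of_nth [simp]: "nu_of mu q a x $ 1 = mu a x" "nu_of mu q a x $ 2 = q a x"
  by (simp_all add: nu_of_def)

lemma alpha_of_nth [simp]: "alpha_of tau q a x $ 1 = -1" "alpha_of tau q a x $ 2 = q a x / (1 - tau)"
  by (simp_all add: alpha_of_def)

lemma axis_2_nth [simp]:
  "axis (1::2) c $ 1 = c" "axis (1::2) c $ 2 = 0" "axis (2::2) c $ 1 = 0" "axis (2::2) c $ 2 = c"
  by (simp_all add: axis_def)

lemma rho_sq_nth [simp]:
  "rho_sq tau y nu $ 1 = y * (if y \<ge> nu$2 then 1 else 0) / (1 - tau) - nu$1"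
  "rho_sq tau y nu $ 2 = tau - (if y \<le> nu$2 then 1 else 0)"
  by (simp_all add: rho_sq_def mk2_def)

lemma rho_sq_borel_measurable:
  assumes "sets K = sets borel"
  shows "(\<lambda>y. rho_sq tau y nu $ i) \<in> borel_measurable K"
  unfolding measurable_cong_sets[OF assms refl] rho_sq_def mk2_def vec_lambda_beta by measurable

lemma integrable_rho_sq_1_shift:
  assumes "finite_measure K" and "sets K = sets borel"
    and "integrable K (\<lambda>y. rho_sq tau y n $ 1)"
  shows "integrable K (\<lambda>y. rho_sq tau y n' $ 1)"
proof -
  interpret finite_measure K by fact
  have "\<bar>rho_sq tau y n' $ 1 - rho_sq tau y n $ 1\<bar>
      \<le> (\<bar>n$2\<bar> + \<bar>n'$2\<bar>) / \<bar>1 - tau\<bar> + \<bar>n$1 - n'$1\<bar>" for y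
  proof -
    have "\<bar>y * ((if y \<ge> n'$2 then 1 else 0) - (if y \<ge> n$2 then 1 else 0))\<bar> \<le> \<bar>n$2\<bar> + \<bar>n'$2\<bar>"
      by auto
    then have "\<bar>y * (if y \<ge> n'$2 then 1 else 0) / (1 - tau) - y * (if y \<ge> n$2 then 1 else 0) / (1 - tau)\<bar>
        \<le> (\<bar>n$2\<bar> + \<bar>n'$2\<bar>) / \<bar>1 - tau\<bar>"
      by (simp add: diff_divide_distrib[symmetric] right_diff_distrib abs_divide divide_right_mono)
    then show ?thesis by simp
  qed
  then have "integrable K (\<lambda>y. rho_sq tau y n' $ 1 - rho_sq tau y n $ 1)"
    by (intro integrable_const_bound[where B = "(\<bar>n$2\<bar> + \<bar>n'$2\<bar>) / \<bar>1 - tau\<bar> + \<bar>n$1 - n'$1\<bar>"]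
        AE_I2 borel_measurable_diff rho_sq_borel_measurable assms(2))
       (simp del: rho_sq_nth)
  from Bochner_Integration.integrable_add[OF this assms(3)] show ?thesis by simp
qed

lemma integrable_rho_sq:
  assumes "finite_measure K" and "sets K = sets borel"
    and "integrable K (\<lambda>y. rho_sq tau y n $ 1)"
  shows "integrable K (\<lambda>y. rho_sq tau y n' $ i)"
proof -
  consider "i = 1" | "i = 2" using exhaust_2 by blast
  then show ?thesis
  proof cases
    case 1
    then show ?thesis using integrable_rho_sq_1_shift[OF assms] by simp
  next
    case 2
    interpret finite_measure K by fact
    show ?thesis
      by (intro integrable_const_bound[where B = "1 + \<bar>tau\<bar>"] AE_I2 rho_sq_borel_measurable assms(2))
         (auto simp: 2 abs_if)
  qed
qed

lemma rho_sq_increment_bound: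
  fixes n :: "real^2" and t :: real
  defines "n' \<equiv> n + t *\<^sub>R axis 2 1"
  assumes "tau \<noteq> 1" and "y \<noteq> n$2" and "y \<noteq> n$2 + t" and "0 < t"
  shows "\<bar>(1 - tau) * (rho_sq tau y n' $ 1 - rho_sq tau y n $ 1)
           - n$2 * (rho_sq tau y n' $ 2 - rho_sq tau y n $ 2)\<bar>
         \<le> t * (rho_sq tau y n $ 2 - rho_sq tau y n' $ 2)"
proof -
  have "rho_sq tau y n' $ 1 - rho_sq tau y n $ 1
      = y * ((if y \<ge> n$2 + t then 1 else 0) - (if y \<ge> n$2 then 1 else 0)) / (1 - tau)"
    by (simp add: n'_def diff_divide_distrib right_diff_distrib)
  then have "(1 - tau) * (rho_sq tau y n' $ 1 - rho_sq tau y n $ 1)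
           - n$2 * (rho_sq tau y n' $ 2 - rho_sq tau y n $ 2)
      = y * ((if y \<ge> n$2 + t then 1 else 0) - (if y \<ge> n$2 then 1 else 0))
           + n$2 * ((if y \<le> n$2 + t then 1 else 0) - (if y \<le> n$2 then 1 else 0))"
    using assms(2) by (simp add: n'_def)
  moreover have "rho_sq tau y n $ 2 - rho_sq tau y n' $ 2
      = (if y \<le> n$2 + t then 1 else 0) - (if y \<le> n$2 then 1 else 0)"
    by (simp add: n'_def)
  ultimately show ?thesis
    using indicator_increment_bound[OF assms(3-5)] by (simp only:)
qed

lemma cmom_increment_bound:
  fixes Kc :: "nat \<Rightarrow> 'x \<Rightarrow> real measure" and n :: "real^2" and t :: real
  defines "n' \<equiv> n + t *\<^sub>R axis 2 1"
  assumes K: "finite_measure (Kc a x)" "sets (Kc a x) = sets borel"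
    and atoms: "measure (Kc a x) {n$2} = 0" "measure (Kc a x) {n$2 + t} = 0"
    and tau: "tau \<noteq> 1" and int: "integrable (Kc a x) (\<lambda>y. rho_sq tau y n $ 1)" and t: "0 < t"
  shows "\<bar>(1 - tau) * (cmom tau Kc a x n' $ 1 - cmom tau Kc a x n $ 1)
           - n$2 * (cmom tau Kc a x n' $ 2 - cmom tau Kc a x n $ 2)\<bar>
         \<le> t * \<bar>cmom tau Kc a x n' $ 2 - cmom tau Kc a x n $ 2\<bar>"
proof -
  let ?K = "Kc a x"
  define g where "g = (\<lambda>y. (1 - tau) * (rho_sq tau y n' $ 1 - rho_sq tau y n $ 1)
                             - n$2 * (rho_sq tau y n' $ 2 - rho_sq tau y n $ 2))"
  define h where "h = (\<lambda>y. t * (rho_sq tau y n $ 2 - rho_sq tau y n' $ 2))"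
  have ints: "integrable ?K (\<lambda>y. rho_sq tau y nu $ i)" for nu i
    by (rule integrable_rho_sq[OF K int])
  have "AE y in ?K. y \<noteq> n$2" "AE y in ?K. y \<noteq> n$2 + t"
    using K atoms by (simp_all add: AE_neq_if_no_atom)
  then have "AE y in ?K. \<bar>g y\<bar> \<le> h y"
    by eventually_elim (use rho_sq_increment_bound tau t in \<open>simp add: g_def h_def n'_def\<close>)
  moreover have "integrable ?K g" "integrable ?K h"
    unfolding g_def h_def
    by (intro Bochner_Integration.integrable_diff integrable_mult_right ints)+
  ultimately have "\<bar>integral\<^sup>L ?K g\<bar> \<le> integral\<^sup>L ?K h"
    by (intro order_trans[OF integral_abs_bound] integral_mono_AE integrable_abs)
  also have "\<dots> = t * (cmom tau Kc a x n $ 2 - cmom tau Kc a x n' $ 2)"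
    using ints by (simp add: h_def cmom_def del: rho_sq_nth)
  also have "\<dots> \<le> t * \<bar>cmom tau Kc a x n' $ 2 - cmom tau Kc a x n $ 2\<bar>"
    using t by (intro mult_left_mono) auto
  finally show ?thesis
    using ints by (simp add: g_def cmom_def del: rho_sq_nth)
qed

lemma jac_first_column:
  assumes K: "prob_space (Kc a x)" "sets (Kc a x) = sets borel"
    and int: "integrable (Kc a x) (\<lambda>y. rho_sq tau y n $ 1)"
  shows "jac tau Kc a x n $ 1 $ 1 = -1" and "jac tau Kc a x n $ 2 $ 1 = 0"
proof -
  interpret prob_space "Kc a x" by (fact K(1))
  have "rho_sq tau y (n + t *\<^sub>R axis 1 1) $ 1 = rho_sq tau y n $ 1 - t" for t y
    by simp
  then have "cmom tau Kc a x (n + t *\<^sub>R axis 1 1) $ 1 = cmom tau Kc a x n $ 1 - t" for t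
    using int by (simp add: cmom_def prob_space del: rho_sq_nth)
  then have "((\<lambda>t. cmom tau Kc a x (n + t *\<^sub>R axis 1 1) $ 1) has_real_derivative -1) (at 0)"
    by (auto intro!: derivative_eq_intros)
  then show "jac tau Kc a x n $ 1 $ 1 = -1"
    by (simp add: jac_def pdir_def DERIV_imp_deriv)
  show "jac tau Kc a x n $ 2 $ 1 = 0"
    by (simp add: jac_def pdir_def cmom_def)
qed

lemma jac_second_column_proportional:
  fixes Kc :: "nat \<Rightarrow> 'x \<Rightarrow> real measure" and n :: "real^2"
  assumes K: "finite_measure (Kc a x)" "sets (Kc a x) = sets borel"
    and atomless: "\<forall>y. measure (Kc a x) {y} = 0"
    and tau: "tau \<noteq> 1" and int: "integrable (Kc a x) (\<lambda>y. rho_sq tau y n $ 1)"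
    and deriv: "\<forall>i. \<exists>d. ((\<lambda>t. cmom tau Kc a x (n + t *\<^sub>R axis 2 1) $ i) has_real_derivative d) (at 0)"
  shows "(1 - tau) * jac tau Kc a x n $ 1 $ 2 = n$2 * jac tau Kc a x n $ 2 $ 2"
proof -
  define F where "F i t = cmom tau Kc a x (n + t *\<^sub>R axis 2 1) $ i" for i t
  obtain d1 d2 where d1: "(F 1 has_real_derivative d1) (at 0)" and d2: "(F 2 has_real_derivative d2) (at 0)"
    using deriv unfolding F_def by blast
  have jac: "jac tau Kc a x n $ 1 $ 2 = d1" "jac tau Kc a x n $ 2 $ 2 = d2"
    using d1 d2 by (simp_all add: jac_def pdir_def F_def[abs_def] DERIV_imp_deriv)
  have "(F 2 \<longlongrightarrow> F 2 0) (at_right 0)"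
    using DERIV_isCont[OF d2] by (simp add: isCont_def filterlim_at_split)
  then have lim: "((\<lambda>t. \<bar>F 2 t - F 2 0\<bar>) \<longlongrightarrow> 0) (at_right 0)"
    by (intro tendsto_rabs_zero LIM_zero)
  have "(1 - tau) * d1 - n$2 * d2 = 0"
  proof (rule DERIV_eq_0_if_right_increments_vanish[OF _ _ lim, where x = 0])
    show "((\<lambda>t. (1 - tau) * F 1 t - n$2 * F 2 t) has_real_derivative (1 - tau) * d1 - n$2 * d2) (at 0)"
      using d1 d2 by (auto intro!: derivative_eq_intros)
    show "\<bar>(1 - tau) * F 1 (0 + t) - n$2 * F 2 (0 + t) - ((1 - tau) * F 1 0 - n$2 * F 2 0)\<bar>
        \<le> t * \<bar>F 2 t - F 2 0\<bar>" if "0 < t" for t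
      using cmom_increment_bound[where Kc = Kc and a = a and x = x, OF K _ _ tau int that] atomless
      by (simp add: F_def algebra_simps)
  qed
  then show ?thesis by (simp add: jac)
qed

lemma matrix_inv_jac_row1:
  fixes Kc :: "nat \<Rightarrow> 'x \<Rightarrow> real measure" and n :: "real^2"
  assumes K: "prob_space (Kc a x)" "sets (Kc a x) = sets borel"
    and atomless: "\<forall>y. measure (Kc a x) {y} = 0"
    and tau: "tau \<noteq> 1" and int: "integrable (Kc a x) (\<lambda>y. rho_sq tau y n $ 1)"
    and deriv: "\<forall>i j. \<exists>d. ((\<lambda>t. cmom tau Kc a x (n + t *\<^sub>R axis j 1) $ i) has_real_derivative d) (at 0)"
    and det: "det (jac tau Kc a x n) \<noteq> 0"
  shows "matrix_inv (jac tau Kc a x n) $ 1 = mk2 (-1) (n$2 / (1 - tau))"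
proof -
  let ?J = "jac tau Kc a x n"
  note col1 = jac_first_column[where Kc = Kc and a = a and x = x, OF K int]
  have proportional: "(1 - tau) * ?J $ 1 $ 2 = n$2 * ?J $ 2 $ 2"
    using jac_second_column_proportional[where Kc = Kc and a = a and x = x,
        OF prob_space.finite_measure[OF K(1)] K(2) atomless tau int] deriv
    by blast
  have "?J $ 2 $ 2 \<noteq> 0"
    using det by (simp add: det_2 col1)
  then have "matrix_inv ?J $ 1 = mk2 (-1) (?J $ 1 $ 2 / ?J $ 2 $ 2)"
    using matrix_inv_upper_triangular_row1[of ?J] by (simp add: col1)
  also have "?J $ 1 $ 2 / ?J $ 2 $ 2 = n$2 / (1 - tau)"
    using proportional tau \<open>?J $ 2 $ 2 \<noteq> 0\<close> by (simp add: field_simps)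
  finally show ?thesis .
qed

lemma boundedness_at_nus:
  assumes "boundedness tau PX Kc es nus Xi c1 c2 c3 c4 c5 G H" and "(e, al, nu) \<in> Xi" and "a \<in> {0,1}"
  shows "AE x in PX.
           (\<forall>i j. \<exists>d. ((\<lambda>t. cmom tau Kc a x (nus a x + t *\<^sub>R axis j 1) $ i) has_real_derivative d) (at 0))
           \<and> det (jac tau Kc a x (nus a x)) > c4
           \<and> (AE y in Kc a x. \<bar>rho_sq tau y (nus a x) $ 1\<bar> \<le> c5)"
proof -
  note B = assms(1)[unfolded boundedness_def, THEN conjunct2, THEN conjunct2, THEN conjunct2,
    THEN conjunct2, THEN conjunct2, THEN conjunct2, THEN conjunct2]
  note B_truth = bspec[OF B assms(2), unfolded prod.case]
  show ?thesis
    using bspec[OF B_truth assms(3)]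
    by (rule eventually_mono) (blast dest: bspec[OF _ hull_inc[OF insertI1]])
qed

lemma alpha_star_csqte:
  assumes tau: "tau \<noteq> 1"
    and Kc_prob: "\<forall>a \<in> {0,1}. \<forall>x \<in> space PX. prob_space (Kc a x) \<and> sets (Kc a x) = sets borel"
    and Kc_cont: "\<forall>a \<in> {0,1}. \<forall>x \<in> space PX. \<forall>y. measure (Kc a x) {y} = 0"
    and bounded: "boundedness tau PX Kc es nus Xi c1 c2 c3 c4 c5 G H"
    and Xi: "(e, al, nu) \<in> Xi" and a: "a \<in> {0,1}"
  shows "AE x in PX. alpha_star tau Kc nus a x = mk2 (-1) (nus a x $ 2 / (1 - tau))"
  using boundedness_at_nus[OF bounded Xi a] AE_space
proof eventually_elim
  case (elim x)
  then have K: "prob_space (Kc a x)" "sets (Kc a x) = sets borel"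
    and atomless: "\<forall>y. measure (Kc a x) {y} = 0"
    using Kc_prob Kc_cont a by auto
  interpret prob_space "Kc a x" by (fact K(1))
  have "integrable (Kc a x) (\<lambda>y. rho_sq tau y (nus a x) $ 1)"
    using elim by (intro integrable_const_bound[where B = c5] rho_sq_borel_measurable K(2)) simp_all
  moreover have "c4 > 0"
    using bounded by (simp add: boundedness_def)
  ultimately show ?case
    unfolding alpha_star_def
    using matrix_inv_jac_row1[where Kc = Kc and a = a and x = x, OF K atomless tau] elim
    by fastforce
qed

lemma psi_gen_alpha_of_nu_of:
  assumes "tau \<noteq> 1" and "y \<noteq> q a x"
  shows "psi_gen tau (x, a, y) e (alpha_of tau q) (nu_of mu q) = psi_csqte tau (x, a, y) e mu q"
proof -
  have "1 - tau \<noteq> 0" using assms(1) by simp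
  then have "alpha_of tau q a x \<bullet> rho_sq tau y (nu_of mu q a x)
      = - (q a x + (y - q a x) * (if y \<ge> q a x then 1 else 0) / (1 - tau) - mu a x)"
    using assms(2) by (cases "y < q a x")
      (simp_all add: inner_vec_def sum_2 field_split_simps, algebra+)
  then show ?thesis
    by (simp add: psi_gen_def psi_csqte_def minus_divide_left mult_minus_right[symmetric])
qed

lemma AE_psi_gen_eq_psi_csqte:
  assumes "finite_measure (Kc a x)" and "sets (Kc a x) = sets borel"
    and "\<forall>y. measure (Kc a x) {y} = 0" and "tau \<noteq> 1"
  shows "AE y in Kc a x.
           psi_gen tau (x, a, y) e (alpha_of tau q) (nu_of mu q) = psi_csqte tau (x, a, y) e mu q"
  using AE_neq_if_no_atom[of "Kc a x" "q a x"] assms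
  by (auto elim!: eventually_mono intro: psi_gen_alpha_of_nu_of)

lemma L2n_nonneg: "0 \<le> L2n M f"
  by (simp add: L2n_def)

lemma L2n_eq_0_if_AE_zero:
  assumes "AE x in M. f x = 0"
  shows "L2n M f = 0"
proof -
  have "AE x in M. (f x)^2 = 0" using assms by eventually_elim simp
  then show ?thesis by (simp add: L2n_def integral_eq_zero_AE)
qed

(* f and g need not be measurable, so L2n M f <= c * L2n M g fails when (g x)^2 is not
   integrable (then L2n M g = 0) while (f x)^2 is; the product form survives this case. *)
lemma L2n_mult_le_if_AE_scaled:
  assumes c: "0 \<le> c" and f: "AE x in M. f x = c * g x"
  shows "L2n M f * L2n M g \<le> c * (L2n M g)^2"
proof (cases "integrable M (\<lambda>x. (g x)^2)")
  case True
  have "AE x in M. (f x)^2 = c^2 * (g x)^2"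
    using f by eventually_elim (simp add: power_mult_distrib)
  then have "(\<integral>x. (f x)^2 \<partial>M) \<le> (\<integral>x. c^2 * (g x)^2 \<partial>M)"
  proof (cases "integrable M (\<lambda>x. (f x)^2)")
    case True
    then show ?thesis
      using \<open>AE x in M. (f x)^2 = c^2 * (g x)^2\<close> \<open>integrable M (\<lambda>x. (g x)^2)\<close>
      by (intro integral_mono_AE) (auto elim: eventually_mono)
  next
    case False
    then show ?thesis by (simp add: not_integrable_integral_eq integral_nonneg_AE)
  qed
  then have "L2n M f \<le> sqrt (c^2 * (\<integral>x. (g x)^2 \<partial>M))"
    unfolding L2n_def by (simp add: real_sqrt_le_mono)
  also have "\<dots> = c * L2n M g"
    using c by (simp add: L2n_def real_sqrt_mult)
  finally have "L2n M f \<le> c * L2n M g" .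
  then show ?thesis
    by (metis L2n_nonneg mult.assoc mult_right_mono power2_eq_square)
next
  case False
  then show ?thesis by (simp add: L2n_def not_integrable_integral_eq)
qed

lemma err_fun_G_sq_H_sq:
  "err_fun PX es als nus G_sq H_sq e al nu =
     (\<Sum>a \<in> {0,1}.
        L2n PX (\<lambda>x. nu a x $ 1 - nus a x $ 1) * L2n PX (\<lambda>x. e x - es x)
      + L2n PX (\<lambda>x. al a x $ 1 - als a x $ 1)
          * (L2n PX (\<lambda>x. nu a x $ 1 - nus a x $ 1) + L2n PX (\<lambda>x. nu a x $ 2 - nus a x $ 2))
      + L2n PX (\<lambda>x. al a x $ 2 - als a x $ 2) * L2n PX (\<lambda>x. nu a x $ 2 - nus a x $ 2)
      + (L2n PX (\<lambda>x. nu a x $ 2 - nus a x $ 2))^2)"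
  by (simp add: err_fun_def sum_2 G_sq_def H_sq_def algebra_simps power2_eq_square)

lemma err_fun_csqte_le:
  fixes als nus :: "nat \<Rightarrow> 'x \<Rightarrow> real^2"
  assumes tau: "tau < 1"
    and alpha: "\<forall>a \<in> {0,1}. AE x in PX. als a x = mk2 (-1) (nus a x $ 2 / (1 - tau))"
  shows "err_fun PX es als nus G_sq H_sq e (alpha_of tau q) (nu_of mu q)
    \<le> (1 + 1 / (1 - tau)) * (\<Sum>a \<in> {0,1::nat}.
          L2n PX (\<lambda>x. mu a x - nus a x $ 1) * L2n PX (\<lambda>x. e x - es x)
          + (L2n PX (\<lambda>x. q a x - nus a x $ 2))^2)"
  unfolding err_fun_G_sq_H_sq nu_of_nth alpha_of_nth sum_distrib_left
proof (rule sum_mono)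
  fix a :: nat assume "a \<in> {0,1}"
  then have alpha_a: "AE x in PX. als a x = mk2 (-1) (nus a x $ 2 / (1 - tau))"
    using alpha by blast
  let ?A = "L2n PX (\<lambda>x. mu a x - nus a x $ 1) * L2n PX (\<lambda>x. e x - es x)"
  let ?B = "L2n PX (\<lambda>x. q a x - nus a x $ 2)"
  let ?D = "L2n PX (\<lambda>x. q a x / (1 - tau) - als a x $ 2)"
  have "L2n PX (\<lambda>x. -1 - als a x $ 1) = 0"
    using alpha_a by (intro L2n_eq_0_if_AE_zero) (auto elim: eventually_mono)
  moreover have "?D * ?B \<le> 1 / (1 - tau) * ?B^2"
    using tau alpha_a
    by (intro L2n_mult_le_if_AE_scaled) (auto elim!: eventually_mono simp: diff_divide_distrib)
  moreover have "0 \<le> 1 / (1 - tau) * ?A"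
    using tau by (simp add: L2n_nonneg)
  moreover have "A + D * B + B^2 \<le> (1 + k) * (A + B^2)"
    if "D * B \<le> k * B^2" and "0 \<le> k * A" for A B D k :: real
    using that by (simp add: algebra_simps)
  ultimately show "?A + L2n PX (\<lambda>x. -1 - als a x $ 1) * (L2n PX (\<lambda>x. mu a x - nus a x $ 1) + ?B)
      + ?D * ?B + ?B^2 \<le> (1 + 1 / (1 - tau)) * (?A + ?B^2)"
    by simp
qed

theorem corollary2:
  fixes tau :: real
    and PX :: "'x measure"
    and Kc :: "nat \<Rightarrow> 'x \<Rightarrow> real measure"
    and es :: "'x \<Rightarrow> real"
    and nus :: "nat \<Rightarrow> 'x \<Rightarrow> real^2"
    and Xi :: "(('x \<Rightarrow> real) \<times> (nat \<Rightarrow> 'x \<Rightarrow> real^2) \<times> (nat \<Rightarrow> 'x \<Rightarrow> real^2)) set"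
    and c1 c2 c3 c4 c5 :: real
    and Kf :: nat
    and ehat :: "nat \<Rightarrow> 'x \<Rightarrow> real"
    and muhat qhat :: "nat \<Rightarrow> nat \<Rightarrow> 'x \<Rightarrow> real"
  assumes tau: "0 < tau" "tau < 1"
    and PX: "prob_space PX"
    and es_meas: "es \<in> borel_measurable PX"
    and es_range: "\<forall>x \<in> space PX. 0 \<le> es x \<and> es x \<le> 1"
    and Kc_prob: "\<forall>a \<in> {0,1}. \<forall>x \<in> space PX. prob_space (Kc a x) \<and> sets (Kc a x) = sets borel"
    and Kc_cont: "\<forall>a \<in> {0,1}. \<forall>x \<in> space PX. \<forall>y. measure (Kc a x) {y} = 0"
    and nus_solves: "\<forall>a \<in> {0,1}. \<forall>x \<in> space PX. cmom tau Kc a x (nus a x) = 0"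
    and bounded: "boundedness tau PX Kc es nus Xi c1 c2 c3 c4 c5 G_sq H_sq"
    and Kf: "Kf \<ge> 2"
    and in_Xi: "\<forall>k \<in> {1..Kf}. (ehat k, alpha_of tau (qhat k), nu_of (muhat k) (qhat k)) \<in> Xi"
  shows
    "(\<forall>a \<in> {0,1}. AE x in PX. alpha_star tau Kc nus a x = mk2 (-1) (nus a x $ 2 / (1 - tau)))
     \<and> (\<forall>(e :: 'x \<Rightarrow> real) (mu :: nat \<Rightarrow> 'x \<Rightarrow> real) q. \<forall>a \<in> {0,1}. \<forall>x \<in> space PX.
          AE y in Kc a x.
            psi_gen tau (x, a, y) e (alpha_of tau q) (nu_of mu q) = psi_csqte tau (x, a, y) e mu q)
     \<and> (\<exists>C > 0. \<forall>(Kf' :: nat) (e' :: nat \<Rightarrow> 'x \<Rightarrow> real) (mu' :: nat \<Rightarrow> nat \<Rightarrow> 'x \<Rightarrow> real) q'.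
          Kf' \<ge> 2 \<longrightarrow>
          (\<forall>k \<in> {1..Kf'}. (e' k, alpha_of tau (q' k), nu_of (mu' k) (q' k)) \<in> Xi) \<longrightarrow>
          (\<Sum>k = 1..Kf'. err_fun PX es (alpha_star tau Kc nus) nus G_sq H_sq
                             (e' k) (alpha_of tau (q' k)) (nu_of (mu' k) (q' k)))
            \<le> C * (\<Sum>k = 1..Kf'. \<Sum>a \<in> {0,1::nat}.
                     L2n PX (\<lambda>x. mu' k a x - nus a x $ 1) * L2n PX (\<lambda>x. e' k x - es x)
                   + (L2n PX (\<lambda>x. q' k a x - nus a x $ 2))^2))"
proof -
  have "(ehat 1, alpha_of tau (qhat 1), nu_of (muhat 1) (qhat 1)) \<in> Xi"
    using in_Xi Kf by simp
  then have alpha: "\<forall>a \<in> {0,1}. AE x in PX. alpha_star tau Kc nus a x = mk2 (-1) (nus a x $ 2 / (1 - tau))"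
    using alpha_star_csqte[OF _ Kc_prob Kc_cont bounded] tau by simp
  have psi: "AE y in Kc a x. psi_gen tau (x, a, y) e (alpha_of tau q) (nu_of mu q) = psi_csqte tau (x, a, y) e mu q"
    if "a \<in> {0,1}" and "x \<in> space PX" for e mu q a x
    using that Kc_prob Kc_cont tau by (intro AE_psi_gen_eq_psi_csqte) (auto intro: prob_space.finite_measure)
  have bound: "(\<Sum>k = 1..K. err_fun PX es (alpha_star tau Kc nus) nus G_sq H_sq
                                (e' k) (alpha_of tau (q' k)) (nu_of (mu' k) (q' k)))
      \<le> (1 + 1 / (1 - tau)) * (\<Sum>k = 1..K. \<Sum>a \<in> {0,1::nat}.
             L2n PX (\<lambda>x. mu' k a x - nus a x $ 1) * L2n PX (\<lambda>x. e' k x - es x)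
             + (L2n PX (\<lambda>x. q' k a x - nus a x $ 2))^2)" for K e' mu' q'
    unfolding sum_distrib_left[of _ _ "{1..K}"] by (intro sum_mono err_fun_csqte_le[OF tau(2) alpha])
  have "0 < 1 + 1 / (1 - tau)"
    using tau by (simp add: add_pos_pos)
  with alpha psi bound show ?thesis
    by blast
qed

end
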